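(* Let $\Bbbk$ be a field, $n\ge2$, $q\in\Bbbk$ a primitive $n$-th root of unity, $T_n(q)$ the Taft algebra and $A$ a unital associative $\Bbbk$-algebra. Let $\cdot:T_n(q)\otimes A\to A$ be a linear map with $g\cdot1_A\in\{0,1_A\}$, and suppose there exists $k\in\{2,\dots,n-1\}$ such that $g^k\cdot a=a$ for all $a\in A$. Then $\cdot$ is a partial action of $T_n(q)$ on $A$ if and only if either $\cdot$ is a global action, or the restriction of $\cdot$ to $\Bbbk C_n\otimes A$ is a partial action of $\Bbbk C_n$ on $A$ with $g\cdot1_A=0$ and $g^ix^j\cdot a=\delta_{j,0}(g^i\cdot a)$ for all $0\le i,j\le n-1$ and $a\in A$.
   Context: The Taft algebra $T_n(q)$ is the Hopf algebra generated by $g,x$ with relations $g^n=1$, $x^n=0$, $xg=qgx$, basis $\{g^ix^j\}$, $g$ group-like, $\Delta(x)=x\otimes1+g\otimes x$, $\varepsilon(x)=0$; $\Bbbk C_n=\mathrm{span}\{1,g,\dots,g^{n-1}\}$. $\delta$ is the Kronecker delta. A partial action of a bialgebra $H$ on $A$ is a linear map $\cdot:H\otimes A\to A$ with $1_H\cdot a=a$, $h\cdot(ab)=(h_1\cdot a)(h_2\cdot b)$, $h\cdot(k\cdot a)=(h_1\cdot1_A)(h_2k\cdot a)$; it is global if moreover $h\cdot1_A=\varepsilon(h)1_A$ for all $h$. *)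

theory Defs
  imports Main "HOL.Vector_Spaces"
begin

definition k_algebra :: "('k::field \<Rightarrow> 'a::ring_1 \<Rightarrow> 'a) \<Rightarrow> bool" where
  "k_algebra sm \<longleftrightarrow> vector_space sm \<and>
     (\<forall>c a b. sm c (a * b) = sm c a * b) \<and> (\<forall>c a b. sm c (a * b) = a * sm c b)"

text \<open>Finite-dimensional bialgebras are given by a finite basis B and structure
  constants: mc b1 b2 b3 = coefficient of b3 in b1*b2; cc b c d = coefficient
  of c \<otimes> d in Delta(b); un = coefficients of the unit; ep = counit on the basis.
  Elements are coefficient functions u :: 'b \<Rightarrow> 'k (only values on B matter).
  A linear map H \<otimes> A \<rightarrow> A is given by its values act b on basis elements b,
  each act b being linear; it is extended linearly in the H-argument.\<close>

definition basis_vec :: "'b \<Rightarrow> 'b \<Rightarrow> 'k::field" where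
  "basis_vec b = (\<lambda>b'. if b' = b then 1 else 0)"

definition hmult :: "'b set \<Rightarrow> ('b \<Rightarrow> 'b \<Rightarrow> 'b \<Rightarrow> 'k::field) \<Rightarrow> ('b \<Rightarrow> 'k) \<Rightarrow> ('b \<Rightarrow> 'k) \<Rightarrow> 'b \<Rightarrow> 'k" where
  "hmult B mc u v = (\<lambda>f. \<Sum>a\<in>B. \<Sum>b\<in>B. u a * v b * mc a b f)"

definition hcomult :: "'b set \<Rightarrow> ('b \<Rightarrow> 'b \<Rightarrow> 'b \<Rightarrow> 'k::field) \<Rightarrow> ('b \<Rightarrow> 'k) \<Rightarrow> 'b \<Rightarrow> 'b \<Rightarrow> 'k" where
  "hcomult B cc u = (\<lambda>c d. \<Sum>b\<in>B. u b * cc b c d)"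

definition hcounit :: "'b set \<Rightarrow> ('b \<Rightarrow> 'k::field) \<Rightarrow> ('b \<Rightarrow> 'k) \<Rightarrow> 'k" where
  "hcounit B ep u = (\<Sum>b\<in>B. u b * ep b)"

definition actL :: "('k::field \<Rightarrow> 'a::ring_1 \<Rightarrow> 'a) \<Rightarrow> 'b set \<Rightarrow> ('b \<Rightarrow> 'a \<Rightarrow> 'a) \<Rightarrow> ('b \<Rightarrow> 'k) \<Rightarrow> 'a \<Rightarrow> 'a" where
  "actL sm B act u x = (\<Sum>b\<in>B. sm (u b) (act b x))"

definition partial_action ::
  "('k::field \<Rightarrow> 'a::ring_1 \<Rightarrow> 'a) \<Rightarrow> 'b set \<Rightarrow> ('b \<Rightarrow> 'b \<Rightarrow> 'b \<Rightarrow> 'k) \<Rightarrow> ('b \<Rightarrow> 'b \<Rightarrow> 'b \<Rightarrow> 'k)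
     \<Rightarrow> ('b \<Rightarrow> 'k) \<Rightarrow> ('b \<Rightarrow> 'a \<Rightarrow> 'a) \<Rightarrow> bool" where
  "partial_action sm B mc cc un act \<longleftrightarrow>
     (\<forall>x. actL sm B act un x = x) \<and>
     (\<forall>u x y. actL sm B act u (x * y) =
        (\<Sum>c\<in>B. \<Sum>d\<in>B. sm (hcomult B cc u c d) (act c x * act d y))) \<and>
     (\<forall>u v x. actL sm B act u (actL sm B act v x) =
        (\<Sum>c\<in>B. \<Sum>d\<in>B. sm (hcomult B cc u c d)
            (act c 1 * actL sm B act (hmult B mc (basis_vec d) v) x)))"

definition global_action ::
  "('k::field \<Rightarrow> 'a::ring_1 \<Rightarrow> 'a) \<Rightarrow> 'b set \<Rightarrow> ('b \<Rightarrow> 'b \<Rightarrow> 'b \<Rightarrow> 'k) \<Rightarrow> ('b \<Rightarrow> 'b \<Rightarrow> 'b \<Rightarrow> 'k)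
     \<Rightarrow> ('b \<Rightarrow> 'k) \<Rightarrow> ('b \<Rightarrow> 'k) \<Rightarrow> ('b \<Rightarrow> 'a \<Rightarrow> 'a) \<Rightarrow> bool" where
  "global_action sm B mc cc un ep act \<longleftrightarrow>
     partial_action sm B mc cc un act \<and>
     (\<forall>u. actL sm B act u 1 = sm (hcounit B ep u) 1)"

fun qbinom :: "'k::comm_ring_1 \<Rightarrow> nat \<Rightarrow> nat \<Rightarrow> 'k" where
  "qbinom q m 0 = 1"
| "qbinom q 0 (Suc k) = 0"
| "qbinom q (Suc m) (Suc k) = qbinom q m k + q ^ Suc k * qbinom q m (Suc k)"

definition primitive_root :: "'k::field \<Rightarrow> nat \<Rightarrow> bool" where
  "primitive_root q n \<longleftrightarrow> q ^ n = 1 \<and> (\<forall>m. 0 < m \<and> m < n \<longrightarrow> q ^ m \<noteq> 1)"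

text \<open>Taft algebra T_n(q): basis g^i x^j, indexed by (i,j), 0 \<le> i,j < n.
  (g^i x^j)(g^l x^m) = q^(j*l) g^((i+l) mod n) x^(j+m) (zero if j+m \<ge> n);
  Delta(g^a x^b) = sum_{l \<le> b} [b,l]_q g^(a+l) x^(b-l) \<otimes> g^a x^l;
  eps(g^i x^j) = delta_{j,0}.\<close>
definition taft_B :: "nat \<Rightarrow> (nat \<times> nat) set" where
  "taft_B n = {0..<n} \<times> {0..<n}"

definition taft_mc :: "nat \<Rightarrow> 'k::field \<Rightarrow> nat \<times> nat \<Rightarrow> nat \<times> nat \<Rightarrow> nat \<times> nat \<Rightarrow> 'k" where
  "taft_mc n q = (\<lambda>(i, j) (l, m) (u, v).
     if u = (i + l) mod n \<and> v = j + m then q ^ (j * l) else 0)"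

definition taft_cc :: "nat \<Rightarrow> 'k::field \<Rightarrow> nat \<times> nat \<Rightarrow> nat \<times> nat \<Rightarrow> nat \<times> nat \<Rightarrow> 'k" where
  "taft_cc n q = (\<lambda>(a, b) (i, j) (i', j').
     if i' = a \<and> j' \<le> b \<and> j = b - j' \<and> i = (a + j') mod n then qbinom q b j' else 0)"

definition taft_unit :: "nat \<times> nat \<Rightarrow> 'k::field" where
  "taft_unit = (\<lambda>(i, j). if i = 0 \<and> j = 0 then 1 else 0)"

definition taft_counit :: "nat \<times> nat \<Rightarrow> 'k::field" where
  "taft_counit = (\<lambda>(i, j). if j = 0 then 1 else 0)"

text \<open>Group algebra k C_n: basis g^i, 0 \<le> i < n.\<close>
definition cyc_B :: "nat \<Rightarrow> nat set" where
  "cyc_B n = {0..<n}"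

definition cyc_mc :: "nat \<Rightarrow> nat \<Rightarrow> nat \<Rightarrow> nat \<Rightarrow> 'k::field" where
  "cyc_mc n i l u = (if u = (i + l) mod n then 1 else 0)"

definition cyc_cc :: "nat \<Rightarrow> nat \<Rightarrow> nat \<Rightarrow> 'k::field" where
  "cyc_cc a i i' = (if i = a \<and> i' = a then 1 else 0)"

definition cyc_unit :: "nat \<Rightarrow> 'k::field" where
  "cyc_unit i = (if i = 0 then 1 else 0)"

end

(* Testing the partial action axioms on basis elements turns them into explicit identities in A.
   The element g^(n-1) x is skew-primitive, Delta(g^(n-1) x) = g^(n-1) x \<otimes> g^(n-1) + 1 \<otimes> g^(n-1) x,
   so composing its action with 1 and with g^k = id gives (1 - q^k) (g^(n-1) x \<cdot> a) = 0; as q^k \<noteq> 1 it acts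
   by zero.  Composing it with g^(i+1) x^(j-1) then yields q^(i+1) (g^i x^j \<cdot> a) = 0, so every
   non-group-like basis element acts by zero and only a partial action of k C_n is left.  If
   g \<cdot> 1 = 1, then g^i \<cdot> 1 = 1 for all i and the action is global.  Conversely, such a
   partial action of k C_n, extended by zero, satisfies the Taft axioms termwise. *)

theory Submission
  imports Defs
begin

locale algebra_over_field = vector_space scale
  for scale :: "'k::field \<Rightarrow> 'a::ring_1 \<Rightarrow> 'a" +
  assumes scale_mult_left: "scale c (a * b) = scale c a * b"
    and scale_mult_right: "scale c (a * b) = a * scale c b"

lemma k_algebra_iff_algebra_over_field: "k_algebra sm \<longleftrightarrow> algebra_over_field sm"
  unfolding k_algebra_def algebra_over_field_def algebra_over_field_axioms_def by blast

sublocale algebra_over_field \<subseteq> vector_space_pair scale scale ..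

lemma sum_rotate3: "(\<Sum>a\<in>A. \<Sum>b\<in>B. \<Sum>c\<in>C. f a b c) = (\<Sum>b\<in>B. \<Sum>c\<in>C. \<Sum>a\<in>A. f a b c)"
  by (subst sum.swap) (rule sum.cong[OF refl], rule sum.swap)

lemma sum_basis_vec_mult:
  fixes f :: "'b \<Rightarrow> 'k::field"
  assumes "finite B" "b \<in> B"
  shows "(\<Sum>b'\<in>B. basis_vec b b' * f b') = f b"
  using assms by (simp add: basis_vec_def of_bool_def[symmetric])

lemma hcomult_basis_vec:
  assumes "finite B" "b \<in> B"
  shows "hcomult B cc (basis_vec b) = cc b"
  using assms by (simp add: hcomult_def sum_basis_vec_mult)

lemma hmult_basis_vec:
  assumes "finite B" "d \<in> B"
  shows "hmult B mc (basis_vec d) v f = (\<Sum>e\<in>B. v e * mc d e f)"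
  using assms by (simp add: hmult_def mult.assoc sum_distrib_left[symmetric] sum_basis_vec_mult)

lemma hmult_basis_vec_basis_vec:
  assumes "finite B" "d \<in> B" "e \<in> B"
  shows "hmult B mc (basis_vec d) (basis_vec e) = mc d e"
  using assms by (intro ext) (simp add: hmult_basis_vec sum_basis_vec_mult)

context algebra_over_field
begin

lemma scale_basis_vec: "scale (basis_vec b b') y = (if b' = b then y else 0)"
  by (simp add: basis_vec_def)

lemma actL_basis_vec:
  assumes "finite B" "b \<in> B"
  shows "actL scale B act (basis_vec b) x = act b x"
  using assms by (simp add: actL_def scale_basis_vec)

lemma mult_sum_scale: "a * (\<Sum>f\<in>F. scale (g f) (h f)) = (\<Sum>f\<in>F. scale (g f) (a * h f))"
  by (simp add: sum_distrib_left scale_mult_right)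

lemma actL_mult_from_basis:
  assumes comult: "\<And>b x y. b \<in> B \<Longrightarrow>
      act b (x * y) = (\<Sum>c\<in>B. \<Sum>d\<in>B. scale (cc b c d) (act c x * act d y))"
  shows "actL scale B act u (x * y) =
      (\<Sum>c\<in>B. \<Sum>d\<in>B. scale (hcomult B cc u c d) (act c x * act d y))"
proof -
  have "actL scale B act u (x * y) =
      (\<Sum>b\<in>B. \<Sum>c\<in>B. \<Sum>d\<in>B. scale (u b * cc b c d) (act c x * act d y))"
    unfolding actL_def by (intro sum.cong refl) (simp add: comult scale_sum_right)
  also have "\<dots> = (\<Sum>c\<in>B. \<Sum>d\<in>B. \<Sum>b\<in>B. scale (u b * cc b c d) (act c x * act d y))"
    by (rule sum_rotate3)
  also have "\<dots> = (\<Sum>c\<in>B. \<Sum>d\<in>B. scale (hcomult B cc u c d) (act c x * act d y))"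
    unfolding hcomult_def by (simp add: scale_sum_left)
  finally show ?thesis .
qed

lemma actL_actL_from_basis:
  assumes linear: "\<forall>b\<in>B. Vector_Spaces.linear scale scale (act b)"
    and compose: "\<And>b e x. b \<in> B \<Longrightarrow> e \<in> B \<Longrightarrow> act b (act e x) =
      (\<Sum>c\<in>B. \<Sum>d\<in>B. scale (cc b c d) (act c 1 * (\<Sum>f\<in>B. scale (mc d e f) (act f x))))"
    and "finite B"
  shows "actL scale B act u (actL scale B act v x) =
      (\<Sum>c\<in>B. \<Sum>d\<in>B. scale (hcomult B cc u c d)
         (act c 1 * actL scale B act (hmult B mc (basis_vec d) v) x))"
proof -
  define w where "w b e c d f = scale (u b * v e * cc b c d * mc d e f) (act c 1 * act f x)" for b e c d f
  have "actL scale B act u (actL scale B act v x) =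
      (\<Sum>b\<in>B. scale (u b) (\<Sum>e\<in>B. scale (v e) (act b (act e x))))"
    unfolding actL_def using linear by (intro sum.cong refl) (simp add: linear_sum linear_scale)
  also have "\<dots> = (\<Sum>b\<in>B. \<Sum>e\<in>B. \<Sum>c\<in>B. \<Sum>d\<in>B. \<Sum>f\<in>B. w b e c d f)"
    unfolding w_def
    by (intro sum.cong refl) (simp add: compose scale_sum_right mult_sum_scale mult.assoc)
  also have "\<dots> = (\<Sum>b\<in>B. \<Sum>c\<in>B. \<Sum>d\<in>B. \<Sum>e\<in>B. \<Sum>f\<in>B. w b e c d f)"
    by (rule sum.cong[OF refl], rule sum_rotate3)
  also have "\<dots> = (\<Sum>c\<in>B. \<Sum>d\<in>B. \<Sum>b\<in>B. \<Sum>e\<in>B. \<Sum>f\<in>B. w b e c d f)"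
    by (rule sum_rotate3)
  also have "\<dots> = (\<Sum>c\<in>B. \<Sum>d\<in>B. \<Sum>e\<in>B. \<Sum>f\<in>B. \<Sum>b\<in>B. w b e c d f)"
    by (rule sum.cong[OF refl], rule sum.cong[OF refl], rule sum_rotate3)
  also have "\<dots> = (\<Sum>c\<in>B. \<Sum>d\<in>B. \<Sum>f\<in>B. \<Sum>e\<in>B. \<Sum>b\<in>B. w b e c d f)"
    by (rule sum.cong[OF refl], rule sum.cong[OF refl], rule sum.swap)
  also have "\<dots> = (\<Sum>c\<in>B. \<Sum>d\<in>B. scale (hcomult B cc u c d)
      (act c 1 * actL scale B act (hmult B mc (basis_vec d) v) x))"
    unfolding w_def hcomult_def actL_def using \<open>finite B\<close>
    by (intro sum.cong refl)
      (simp add: hmult_basis_vec scale_sum_left scale_sum_right mult_sum_scale sum_distrib_left mult_ac)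
  finally show ?thesis .
qed

lemma partial_action_iff_basis:
  assumes "finite B" and linear: "\<forall>b\<in>B. Vector_Spaces.linear scale scale (act b)"
  shows "partial_action scale B mc cc un act \<longleftrightarrow>
    (\<forall>x. actL scale B act un x = x) \<and>
    (\<forall>b\<in>B. \<forall>x y. act b (x * y) = (\<Sum>c\<in>B. \<Sum>d\<in>B. scale (cc b c d) (act c x * act d y))) \<and>
    (\<forall>b\<in>B. \<forall>e\<in>B. \<forall>x. act b (act e x) =
      (\<Sum>c\<in>B. \<Sum>d\<in>B. scale (cc b c d) (act c 1 * (\<Sum>f\<in>B. scale (mc d e f) (act f x)))))"
    (is "_ \<longleftrightarrow> ?unit \<and> ?comult \<and> ?compose")
proof
  assume pa: "partial_action scale B mc cc un act"
  have ?comult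
  proof (intro ballI allI)
    fix b x y assume "b \<in> B"
    moreover from pa have "actL scale B act (basis_vec b) (x * y) =
        (\<Sum>c\<in>B. \<Sum>d\<in>B. scale (hcomult B cc (basis_vec b) c d) (act c x * act d y))"
      unfolding partial_action_def by blast
    ultimately show "act b (x * y) = (\<Sum>c\<in>B. \<Sum>d\<in>B. scale (cc b c d) (act c x * act d y))"
      using \<open>finite B\<close> by (simp add: actL_basis_vec hcomult_basis_vec)
  qed
  moreover have ?compose
  proof (intro ballI allI)
    fix b e x assume "b \<in> B" "e \<in> B"
    moreover from pa have "actL scale B act (basis_vec b) (actL scale B act (basis_vec e) x) =
        (\<Sum>c\<in>B. \<Sum>d\<in>B. scale (hcomult B cc (basis_vec b) c d)
          (act c 1 * actL scale B act (hmult B mc (basis_vec d) (basis_vec e)) x))"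
      unfolding partial_action_def by blast
    ultimately show "act b (act e x) =
        (\<Sum>c\<in>B. \<Sum>d\<in>B. scale (cc b c d) (act c 1 * (\<Sum>f\<in>B. scale (mc d e f) (act f x))))"
      using \<open>finite B\<close>
      by (simp add: actL_basis_vec hcomult_basis_vec hmult_basis_vec_basis_vec, simp add: actL_def)
  qed
  ultimately show "?unit \<and> ?comult \<and> ?compose"
    using pa unfolding partial_action_def by blast
next
  assume "?unit \<and> ?comult \<and> ?compose"
  with \<open>finite B\<close> linear show "partial_action scale B mc cc un act"
    unfolding partial_action_def
    by (intro conjI allI actL_mult_from_basis actL_actL_from_basis) auto
qed

lemma taft_cc_sum:
  assumes "i < n" "j < n"
  shows "(\<Sum>c\<in>taft_B n. \<Sum>d\<in>taft_B n. scale (taft_cc n q (i, j) c d) (F c d)) =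
    (\<Sum>t\<le>j. scale (qbinom q j t) (F ((i + t) mod n, j - t) (i, t)))"
proof -
  have inner: "(\<Sum>c\<in>taft_B n. scale (taft_cc n q (i, j) c d) (F c d)) =
      (if fst d = i \<and> snd d \<le> j then
         scale (qbinom q j (snd d)) (F ((i + snd d) mod n, j - snd d) d) else 0)"
    for d
  proof -
    obtain i' t where d: "d = (i', t)"
      by fastforce
    have "scale (taft_cc n q (i, j) c (i', t)) (F c (i', t)) =
        (if c = ((i + t) mod n, j - t) then
           (if i' = i \<and> t \<le> j then scale (qbinom q j t) (F c (i', t)) else 0) else 0)" for c
      by (auto simp: taft_cc_def split: prod.splits)
    moreover have "((i + t) mod n, j - t) \<in> taft_B n"
      using assms by (auto simp: taft_B_def)
    ultimately show ?thesis
      by (simp add: d taft_B_def)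
  qed
  have "(\<Sum>c\<in>taft_B n. \<Sum>d\<in>taft_B n. scale (taft_cc n q (i, j) c d) (F c d)) =
      (\<Sum>d\<in>taft_B n. if fst d = i \<and> snd d \<le> j then
         scale (qbinom q j (snd d)) (F ((i + snd d) mod n, j - snd d) d) else 0)"
    by (subst sum.swap) (simp only: inner)
  also have "\<dots> = (\<Sum>d\<in>(\<lambda>t. (i, t)) ` {..j}. scale (qbinom q j (snd d)) (F ((i + snd d) mod n, j - snd d) d))"
    using assms by (intro sum.mono_neutral_cong_right) (auto simp: taft_B_def)
  also have "\<dots> = (\<Sum>t\<le>j. scale (qbinom q j t) (F ((i + t) mod n, j - t) (i, t)))"
    by (subst sum.reindex) (auto simp: inj_on_def)
  finally show ?thesis .
qed

lemma taft_mc_sum: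
  assumes "0 < n"
  shows "(\<Sum>f\<in>taft_B n. scale (taft_mc n q (i, j) (l, m) f) (G f)) =
    (if j + m < n then scale (q ^ (j * l)) (G ((i + l) mod n, j + m)) else 0)"
proof -
  have "scale (taft_mc n q (i, j) (l, m) f) (G f) =
      (if f = ((i + l) mod n, j + m) then scale (q ^ (j * l)) (G ((i + l) mod n, j + m)) else 0)" for f
    by (auto simp: taft_mc_def split: prod.splits)
  moreover have "((i + l) mod n, j + m) \<in> taft_B n \<longleftrightarrow> j + m < n"
    using assms by (auto simp: taft_B_def)
  ultimately show ?thesis
    by (simp add: taft_B_def)
qed

lemma actL_taft_unit:
  assumes "0 < n"
  shows "actL scale (taft_B n) act taft_unit x = act (0, 0) x"
proof -
  have "scale (taft_unit b) (act b x) = (if b = (0, 0) then act (0, 0) x else 0)" for b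
    by (auto simp: taft_unit_def split: prod.splits)
  with assms show ?thesis
    by (simp add: actL_def taft_B_def)
qed

lemma ball_cyc_B: "(\<forall>i\<in>cyc_B n. P i) \<longleftrightarrow> (\<forall>i<n. P i)"
  by (auto simp: cyc_B_def)

lemma ball_taft_B: "(\<forall>b\<in>taft_B n. P b) \<longleftrightarrow> (\<forall>i<n. \<forall>j<n. P (i, j))"
  by (auto simp: taft_B_def)

lemma cyc_cc_sum:
  assumes "i \<in> cyc_B n"
  shows "(\<Sum>c\<in>cyc_B n. \<Sum>d\<in>cyc_B n. scale (cyc_cc i c d) (F c d)) = F i i"
proof -
  have "scale (cyc_cc i c d) (F c d) = (if d = i then if c = i then F i i else 0 else 0)" for c d
    by (simp add: cyc_cc_def)
  with assms show ?thesis
    by (simp add: cyc_B_def)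
qed

lemma cyc_mc_sum:
  assumes "0 < n"
  shows "(\<Sum>f\<in>cyc_B n. scale (cyc_mc n i l f) (G f)) = G ((i + l) mod n)"
proof -
  have "scale (cyc_mc n i l f) (G f) = (if f = (i + l) mod n then G ((i + l) mod n) else 0)" for f
    by (simp add: cyc_mc_def)
  with assms show ?thesis
    by (simp add: cyc_B_def)
qed

lemma actL_cyc_unit:
  assumes "0 < n"
  shows "actL scale (cyc_B n) G cyc_unit x = G 0 x"
proof -
  have "scale (cyc_unit i) (G i x) = (if i = 0 then G 0 x else 0)" for i
    by (simp add: cyc_unit_def)
  with assms show ?thesis
    by (simp add: actL_def cyc_B_def)
qed

lemma cyclic_partial_action_iff:
  assumes "0 < n" and linear: "\<forall>i\<in>cyc_B n. Vector_Spaces.linear scale scale (G i)"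
  shows "partial_action scale (cyc_B n) (cyc_mc n) cyc_cc cyc_unit G \<longleftrightarrow>
    (\<forall>x. G 0 x = x) \<and>
    (\<forall>i<n. \<forall>x y. G i (x * y) = G i x * G i y) \<and>
    (\<forall>i<n. \<forall>l<n. \<forall>x. G i (G l x) = G i 1 * G ((i + l) mod n) x)"
proof -
  have "finite (cyc_B n)"
    by (simp add: cyc_B_def)
  with assms show ?thesis
    by (simp add: partial_action_iff_basis actL_cyc_unit cyc_cc_sum cyc_mc_sum ball_cyc_B)
qed

end

locale taft_linear_map = algebra_over_field scale
  for scale :: "'k::field \<Rightarrow> 'a::ring_1 \<Rightarrow> 'a" +
  fixes n :: nat and q :: 'k and act :: "nat \<times> nat \<Rightarrow> 'a \<Rightarrow> 'a"
  assumes two_le_n: "2 \<le> n"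
    and linear_act: "\<forall>b\<in>taft_B n. Vector_Spaces.linear scale scale (act b)"
begin

lemma n_pos: "0 < n"
  using two_le_n by simp

lemma linear_act_group_like: "\<forall>i\<in>cyc_B n. Vector_Spaces.linear scale scale (act (i, 0))"
  using linear_act n_pos by (simp add: ball_cyc_B ball_taft_B)

lemma taft_partial_action_iff:
  "partial_action scale (taft_B n) (taft_mc n q) (taft_cc n q) taft_unit act \<longleftrightarrow>
    (\<forall>x. act (0, 0) x = x) \<and>
    (\<forall>i<n. \<forall>j<n. \<forall>x y. act (i, j) (x * y) =
      (\<Sum>t\<le>j. scale (qbinom q j t) (act ((i + t) mod n, j - t) x * act (i, t) y))) \<and>
    (\<forall>i<n. \<forall>j<n. \<forall>l<n. \<forall>m<n. \<forall>x. act (i, j) (act (l, m) x) =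
      (\<Sum>t\<le>j. scale (qbinom q j t) (act ((i + t) mod n, j - t) 1 *
        (if t + m < n then scale (q ^ (t * l)) (act ((i + l) mod n, t + m) x) else 0))))"
proof -
  have "finite (taft_B n)"
    by (simp add: taft_B_def)
  then show ?thesis
    using linear_act n_pos
    by (simp add: partial_action_iff_basis actL_taft_unit taft_cc_sum taft_mc_sum ball_taft_B
        cong: conj_cong)
qed

lemma partial_action_if_cyclic:
  assumes cyclic: "partial_action scale (cyc_B n) (cyc_mc n) cyc_cc cyc_unit (\<lambda>i. act (i, 0))"
    and vanish: "\<And>i j x. i < n \<Longrightarrow> 0 < j \<Longrightarrow> j < n \<Longrightarrow> act (i, j) x = 0"
  shows "partial_action scale (taft_B n) (taft_mc n q) (taft_cc n q) taft_unit act"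
proof -
  have unit: "act (0, 0) x = x"
    and mult: "\<And>i. i < n \<Longrightarrow> act (i, 0) (x * y) = act (i, 0) x * act (i, 0) y"
    and compose: "\<And>i l. i < n \<Longrightarrow> l < n \<Longrightarrow>
      act (i, 0) (act (l, 0) x) = act (i, 0) 1 * act ((i + l) mod n, 0) x" for x y
    using cyclic n_pos linear_act_group_like by (simp_all add: cyclic_partial_action_iff)
  have act_zero: "act b 0 = 0" if "b \<in> taft_B n" for b
    using linear_act that by (simp add: linear_0)
  have comult: "act (i, j) (x * y) =
      (\<Sum>t\<le>j. scale (qbinom q j t) (act ((i + t) mod n, j - t) x * act (i, t) y))"
    if "i < n" "j < n" for i j x y
  proof (cases "j = 0")
    case True
    with that mult show ?thesis by simp
  next
    case False
    have "act ((i + t) mod n, j - t) x * act (i, t) y = 0" if "t \<le> j" for t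
      using vanish n_pos \<open>i < n\<close> \<open>j < n\<close> False that
      by (cases "t = j") auto
    with False that vanish show ?thesis by simp
  qed
  have composition: "act (i, j) (act (l, m) x) =
      (\<Sum>t\<le>j. scale (qbinom q j t) (act ((i + t) mod n, j - t) 1 *
        (if t + m < n then scale (q ^ (t * l)) (act ((i + l) mod n, t + m) x) else 0)))"
    if "i < n" "j < n" "l < n" "m < n" for i j l m x
  proof (cases "j = 0 \<and> m = 0")
    case True
    with that compose show ?thesis by simp
  next
    case False
    have "act (i, j) (act (l, m) x) = 0"
      using vanish act_zero that False by (cases "j = 0") (auto simp: taft_B_def)
    moreover have "act ((i + t) mod n, j - t) 1 *
        (if t + m < n then scale (q ^ (t * l)) (act ((i + l) mod n, t + m) x) else 0) = 0"
      if "t \<le> j" for t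
      using vanish n_pos \<open>j < n\<close> False that
      by (cases "t = j") auto
    ultimately show ?thesis by simp
  qed
  show ?thesis
    unfolding taft_partial_action_iff using unit comult composition by blast
qed

end

lemma mod_add_pred_Suc:
  fixes i n :: nat
  assumes "i < n"
  shows "(n - 1 + Suc i mod n) mod n = i"
proof (cases "Suc i < n")
  case True
  then have "n - 1 + Suc i mod n = n + i"
    by simp
  with assms show ?thesis
    by simp
next
  case False
  with assms have "Suc i = n"
    by simp
  with assms show ?thesis
    by auto
qed

locale taft_partial_action = taft_linear_map +
  assumes partial_action: "partial_action scale (taft_B n) (taft_mc n q) (taft_cc n q) taft_unit act"
begin

lemma act_unit: "act (0, 0) x = x"
  using partial_action by (simp add: taft_partial_action_iff)

lemma act_group_like_mult:
  assumes "i < n"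
  shows "act (i, 0) (x * y) = act (i, 0) x * act (i, 0) y"
  using partial_action assms two_le_n by (simp add: taft_partial_action_iff)

lemma act_group_like_compose:
  assumes "l < n" "i < n" "j < n"
  shows "act (l, 0) (act (i, j) x) = act (l, 0) 1 * act ((l + i) mod n, j) x"
  using partial_action assms by (simp add: taft_partial_action_iff)

lemma act_skew_compose:
  assumes "l < n" "m + 1 < n"
  shows "act (n - 1, 1) (act (l, m) x) =
    act (n - 1, 1) 1 * act ((n - 1 + l) mod n, m) x + scale (q ^ l) (act ((n - 1 + l) mod n, m + 1) x)"
proof -
  have "{..Suc 0} = {0, 1}"
    by auto
  with partial_action assms two_le_n show ?thesis
    by (simp add: taft_partial_action_iff act_unit numeral_2_eq_2 add.commute)
qed

lemma cyclic_restriction: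
  "partial_action scale (cyc_B n) (cyc_mc n) cyc_cc cyc_unit (\<lambda>i. act (i, 0))"
  using n_pos linear_act_group_like
  by (simp add: cyclic_partial_action_iff act_unit act_group_like_mult act_group_like_compose)

lemma skew_primitive_act_eq_0:
  assumes "k < n" and "q ^ k \<noteq> 1" and fix_k: "\<And>a. act (k, 0) a = a"
  shows "act (n - 1, 1) x = 0"
proof -
  have "n - 1 < n" "1 < n"
    using two_le_n by auto
  have annihilate: "act (n - 1, 1) 1 * act (n - 1, 0) y = 0" for y
    using act_skew_compose[of 0 0 y] \<open>1 < n\<close> by (simp add: act_unit)
  have shift: "act ((k + (n - 1)) mod n, j) y = act (n - 1, j) y" if "j < n" for j y
    using act_group_like_compose[of k "n - 1" j y] \<open>k < n\<close> \<open>n - 1 < n\<close> that fix_k by simp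
  have "act (n - 1, 1) x = act (n - 1, 1) 1 * act ((n - 1 + k) mod n, 0) x +
      scale (q ^ k) (act ((n - 1 + k) mod n, 1) x)"
    using act_skew_compose[of k 0 x] \<open>k < n\<close> \<open>1 < n\<close> fix_k by simp
  also have "\<dots> = scale (q ^ k) (act (n - 1, 1) x)"
    using shift[of 0] shift[of 1] annihilate \<open>1 < n\<close> by (simp add: add.commute)
  finally have "scale (1 - q ^ k) (act (n - 1, 1) x) = 0"
    by (simp add: scale_left_diff_distrib)
  with \<open>q ^ k \<noteq> 1\<close> show ?thesis
    by simp
qed

lemma act_non_group_like_eq_0:
  assumes "q \<noteq> 0" and skew: "\<And>x. act (n - 1, 1) x = 0"
    and "i < n" "0 < j" "j < n"
  shows "act (i, j) x = 0"
proof -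
  have "act (n - 1, 1) (act (Suc i mod n, j - 1) x) =
      act (n - 1, 1) 1 * act (i, j - 1) x + scale (q ^ (Suc i mod n)) (act (i, j) x)"
    using act_skew_compose[of "Suc i mod n" "j - 1" x] assms
    unfolding mod_add_pred_Suc[OF \<open>i < n\<close>] by simp
  then have "scale (q ^ (Suc i mod n)) (act (i, j) x) = 0"
    using skew by simp
  with \<open>q \<noteq> 0\<close> show ?thesis
    by simp
qed

lemma global_action_if_unit_fixed:
  assumes vanish: "\<And>i j x. i < n \<Longrightarrow> 0 < j \<Longrightarrow> j < n \<Longrightarrow> act (i, j) x = 0"
    and "act (1, 0) 1 = 1"
  shows "global_action scale (taft_B n) (taft_mc n q) (taft_cc n q) taft_unit taft_counit act"
proof -
  have group_like_unit: "act (i, 0) 1 = 1" if "i < n" for i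
    using that
  proof (induction i)
    case 0
    then show ?case by (simp add: act_unit)
  next
    case (Suc i)
    then show ?case
      using act_group_like_compose[of 1 i 0 1] \<open>act (1, 0) 1 = 1\<close> by simp
  qed
  have "act b 1 = scale (taft_counit b) 1" if "b \<in> taft_B n" for b
    using that group_like_unit vanish by (auto simp: taft_B_def taft_counit_def)
  then show ?thesis
    unfolding global_action_def actL_def hcounit_def
    by (simp add: partial_action scale_sum_left)
qed

end

theorem corollary3p13:
  fixes sm :: "'k::field \<Rightarrow> 'a::ring_1 \<Rightarrow> 'a"
    and n :: nat and q :: 'k
    and act :: "nat \<times> nat \<Rightarrow> 'a \<Rightarrow> 'a"
  assumes alg: "k_algebra sm"
    and n2: "n \<ge> 2"
    and prim: "primitive_root q n"
    and lin: "\<forall>b\<in>taft_B n. Vector_Spaces.linear sm sm (act b)"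
    and g1: "act (1, 0) 1 = 0 \<or> act (1, 0) 1 = 1"
    and gk: "\<exists>k. 2 \<le> k \<and> k \<le> n - 1 \<and> (\<forall>a. act (k, 0) a = a)"
  shows "partial_action sm (taft_B n) (taft_mc n q) (taft_cc n q) taft_unit act \<longleftrightarrow>
     global_action sm (taft_B n) (taft_mc n q) (taft_cc n q) taft_unit taft_counit act \<or>
     (partial_action sm (cyc_B n) (cyc_mc n) cyc_cc cyc_unit (\<lambda>i. act (i, 0)) \<and>
      act (1, 0) 1 = 0 \<and>
      (\<forall>i<n. \<forall>j<n. \<forall>a. act (i, j) a = (if j = 0 then act (i, 0) a else 0)))"
proof -
  interpret taft_linear_map sm n q act
    using alg n2 lin
    by (simp add: taft_linear_map_def taft_linear_map_axioms_def k_algebra_iff_algebra_over_field)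
  obtain k where "2 \<le> k" "k \<le> n - 1" and fix_k: "\<And>a. act (k, 0) a = a"
    using gk by blast
  with n2 prim have "k < n" "q ^ k \<noteq> 1" "q \<noteq> 0"
    unfolding primitive_root_def by (auto simp: power_0_left)
  show ?thesis
  proof
    assume "partial_action sm (taft_B n) (taft_mc n q) (taft_cc n q) taft_unit act"
    then interpret taft_partial_action sm n q act
      by unfold_locales
    have "act (i, j) x = 0" if "i < n" "0 < j" "j < n" for i j x
      using act_non_group_like_eq_0 skew_primitive_act_eq_0 fix_k
        \<open>k < n\<close> \<open>q ^ k \<noteq> 1\<close> \<open>q \<noteq> 0\<close> that
      by blast
    with g1 show "global_action sm (taft_B n) (taft_mc n q) (taft_cc n q) taft_unit taft_counit act \<or>
     (partial_action sm (cyc_B n) (cyc_mc n) cyc_cc cyc_unit (\<lambda>i. act (i, 0)) \<and>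
      act (1, 0) 1 = 0 \<and>
      (\<forall>i<n. \<forall>j<n. \<forall>a. act (i, j) a = (if j = 0 then act (i, 0) a else 0)))"
      using global_action_if_unit_fixed cyclic_restriction by auto
  qed (use partial_action_if_cyclic in \<open>auto simp: global_action_def\<close>)
qed

end
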